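(* Let $\alpha>0$ and let $f:[0,\infty)\to[0,\infty)$ be $(-1/\alpha)$-concave and integrable. Define $H_f:[0,\alpha)\to\mathbb{R}_+$ by \[ H_f(p)=\frac{1}{B(p,\alpha-p)}\int_0^{+\infty}t^{p-1}f(t)\,dt \quad (0<p<\alpha),\qquad H_f(0)=f(0), \] where $B(p,\alpha-p)=\int_0^1u^{p-1}(1-u)^{\alpha-p-1}du=\int_0^{+\infty}t^{p-1}(t+1)^{-\alpha}dt$. Then $H_f$ is log-concave on $[0,\alpha)$.
   Context: For $\alpha>0$, a function $f\ge 0$ defined on a convex set is $(-1/\alpha)$-concave if for all $x,y$ with $f(x)f(y)>0$ and all $\lambda\in[0,1]$, $f((1-\lambda)x+\lambda y)\ge\big((1-\lambda)f(x)^{-1/\alpha}+\lambda f(y)^{-1/\alpha}\big)^{-\alpha}$; equivalently $f=\varphi^{-\alpha}$ for some convex $\varphi$ with values in $(0,+\infty]$. *)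

theory Defs
  imports "HOL-Analysis.Analysis"
begin

definition neg_inv_concave_on :: "real \<Rightarrow> real set \<Rightarrow> (real \<Rightarrow> real) \<Rightarrow> bool" where
  "neg_inv_concave_on \<alpha> S f \<longleftrightarrow>
     (\<forall>x\<in>S. f x \<ge> 0) \<and>
     (\<forall>x\<in>S. \<forall>y\<in>S. f x * f y > 0 \<longrightarrow> (\<forall>l\<in>{0..1}.
        f ((1 - l) * x + l * y) \<ge>
          ((1 - l) * f x powr (-1/\<alpha>) + l * f y powr (-1/\<alpha>)) powr (-\<alpha>)))"

definition log_concave_on :: "real set \<Rightarrow> (real \<Rightarrow> real) \<Rightarrow> bool" where
  "log_concave_on S g \<longleftrightarrow>
     (\<forall>x\<in>S. g x \<ge> 0) \<and>
     (\<forall>x\<in>S. \<forall>y\<in>S. \<forall>l\<in>{0<..<1}.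
        g ((1 - l) * x + l * y) \<ge> g x powr (1 - l) * g y powr l)"

definition H_fun :: "real \<Rightarrow> (real \<Rightarrow> real) \<Rightarrow> real \<Rightarrow> real" where
  "H_fun \<alpha> f p = (if p = 0 then f 0
      else integral {0<..} (\<lambda>t. t powr (p - 1) * f t) / Beta p (\<alpha> - p))"

end

theory Submission
  imports Defs
begin

text \<open>
  For g(t) = k (1 + t/s)^(-\<alpha>) the substitution t = s u/(1 - u) gives
  \<integral>_0^\<infinity> t^(p-1) g(t) dt = k s^p B(p, \<alpha> - p): H_g(p) = k s^p is log-linear in p, while
  g^(-1/\<alpha>) is affine. Given 0 \<le> x < z < y < \<alpha>, take k, s with k s^p slightly below H_f(p) at
  p = x and p = y (for x = 0 this means g(0) = f(0)). As f^(-1/\<alpha>) is convex, S = {t > 0. g t < f t}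
  is an interval (an initial segment when g(0) = f(0)), with at least two points as
  \<integral> t^(x-1) (f - g) > 0. A function a t^(x-z) + b t^(y-z) with a, b \<ge> 0 is convex in ln t, so it
  can be chosen \<le> 1 on S and \<ge> 1 off S; then t^(z-1) (1 - a t^(x-z) - b t^(y-z)) (f - g) \<ge> 0, and
  integrating gives H_f(z) \<ge> k s^z. Letting k s^p tend to the log-linear interpolation of H_f
  between x and y proves the claim. The integrals involved converge by domination; near 0 this
  needs f to be bounded, which follows from \<integral> t^(y-1) f < \<infinity> and y < \<alpha>.
\<close>

lemma Beta_real_pos: "0 < a \<Longrightarrow> 0 < b \<Longrightarrow> 0 < Beta a (b::real)"
  unfolding Beta_def by (simp add: Gamma_real_pos)

lemma Beta_Ioi_substitution:
  fixes q \<alpha> s u :: real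
  assumes s: "0 < s" and u: "0 < u" "u < 1"
  shows "(s * u / (1 - u)) powr (q - 1) * (1 + s * u / (1 - u) / s) powr (-\<alpha>) * (s / (1 - u)\<^sup>2)
    = s powr q * (u powr (q - 1) * (1 - u) powr (\<alpha> - q - 1))"
proof -
  define t where "t = s * u / (1 - u)"
  have "1 + t / s = 1 / (1 - u)"
    using u s by (simp add: t_def field_simps)
  then have "(1 + t / s) powr (-\<alpha>) = (1 - u) powr \<alpha>"
    using u by (simp add: powr_divide powr_minus_divide)
  moreover have "t powr (q - 1) = s powr (q - 1) * u powr (q - 1) * (1 - u) powr (1 - q)"
  proof -
    have "(1 - u) powr (1 - q) = 1 / (1 - u) powr (q - 1)"
      by (metis minus_diff_eq powr_minus_divide)
    then show ?thesis
      using u s by (simp add: t_def powr_divide powr_mult)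
  qed
  moreover have "s / (1 - u)\<^sup>2 = s * (1 - u) powr (-2)"
    using u by (simp add: powr_minus powr_numeral divide_inverse)
  moreover have "(1 - u) powr (1 - q) * (1 - u) powr \<alpha> * (1 - u) powr (-2) = (1 - u) powr (\<alpha> - q - 1)"
    using u by (simp add: powr_add[symmetric])
  moreover have "s powr (q - 1) * s = s powr q"
    using s by (simp add: powr_diff)
  ultimately show ?thesis
    unfolding t_def[symmetric] by (simp add: mult_ac)
qed

lemma has_integral_Beta_Ioi:
  fixes q \<alpha> s :: real
  assumes q: "0 < q" "q < \<alpha>" and s: "0 < s"
  shows "((\<lambda>t. t powr (q - 1) * (1 + t / s) powr (-\<alpha>)) has_integral s powr q * Beta q (\<alpha> - q)) {0<..}"
proof -
  define F where "F = (\<lambda>t::real. t powr (q - 1) * (1 + t / s) powr (-\<alpha>))"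
  define g where "g = (\<lambda>u::real. s * u / (1 - u))"
  define g' where "g' = (\<lambda>u::real. s / (1 - u)\<^sup>2)"
  define B where "B = (\<lambda>u::real. u powr (q - 1) * (1 - u) powr (\<alpha> - q - 1))"
  have FB: "F (g u) * g' u = s powr q * B u" if "0 < u" "u < 1" for u
    unfolding F_def g_def g'_def B_def using Beta_Ioi_substitution[OF s that] .
  have Ioo: "einterval 0 1 = {0<..<(1::real)}"
    by (auto simp: einterval_def zero_ereal_def one_ereal_def)
  have B_int: "(B has_integral Beta q (\<alpha> - q)) {0<..<1}"
    using has_integral_Beta_real[of q "\<alpha> - q"] q by (simp add: B_def has_integral_Icc_iff_Ioo)
  have intB: "set_integrable lborel (einterval 0 1) (\<lambda>u. F (g u) * g' u)"
  proof -
    have "set_integrable lborel {0..1} (\<lambda>u. s powr q * B u)"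
      using set_integrable_mult_right[OF integrable_Beta[of q "\<alpha> - q"], of "s powr q"] q
      by (simp add: B_def)
    then have "set_integrable lborel {0<..<1} (\<lambda>u. s powr q * B u)"
      by (rule set_integrable_subset) auto
    then show ?thesis
      unfolding Ioo by (rule set_integrable_cong[THEN iffD1, rotated -1]) (auto simp: FB)
  qed
  have lim: "filterlim (\<lambda>x. s * x * inverse (1 - x)) at_top (at_left (1::real))"
    by (rule filterlim_tendsto_pos_mult_at_top[where c=s])
      (auto intro!: tendsto_eq_intros filterlim_inverse_at_top simp: s eventually_at_filter)
  note subst = interval_integral_substitution_nonneg[of 0 1 g g' F 0 \<infinity>]
  have hyps: "\<And>x. 0 < ereal x \<Longrightarrow> ereal x < 1 \<Longrightarrow> (g has_real_derivative g' x) (at x)"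
    "\<And>x. 0 < ereal x \<Longrightarrow> ereal x < 1 \<Longrightarrow> isCont F (g x)"
    "\<And>x. 0 < ereal x \<Longrightarrow> ereal x < 1 \<Longrightarrow> isCont g' x"
    "\<And>x. 0 < ereal x \<Longrightarrow> ereal x < 1 \<Longrightarrow> 0 \<le> F (g x)"
    "\<And>x. 0 \<le> ereal x \<Longrightarrow> ereal x \<le> 1 \<Longrightarrow> 0 \<le> g' x"
    "((ereal \<circ> g \<circ> real_of_ereal) \<longlongrightarrow> 0) (at_right 0)"
    "((ereal \<circ> g \<circ> real_of_ereal) \<longlongrightarrow> \<infinity>) (at_left 1)"
    subgoal unfolding g_def g'_def
      by (auto intro!: derivative_eq_intros simp: power2_eq_square field_simps zero_ereal_def one_ereal_def)
    subgoal unfolding F_def g_def using s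
      by (auto intro!: continuous_intros simp: zero_ereal_def one_ereal_def field_simps add_pos_pos)
    subgoal unfolding g'_def by (auto intro!: continuous_intros simp: zero_ereal_def one_ereal_def)
    subgoal unfolding F_def by simp
    subgoal unfolding g'_def using s by simp
    subgoal unfolding zero_ereal_def ereal_tendsto_simps g_def by (auto intro!: tendsto_eq_intros)
    subgoal unfolding one_ereal_def ereal_tendsto_simps g_def using lim by (simp add: divide_inverse)
    done
  have F_int: "set_integrable lborel (einterval 0 \<infinity>) F"
    using subst(1)[OF _ hyps] intB by simp
  have "integral {0<..} F = (LBINT x=0..1. F (g x) * g' x)"
    using subst(2)[OF _ hyps] intB F_int set_borel_integral_eq_integral(2)[of "{0<..}" F]
    by (simp add: interval_lebesgue_integral_def zero_ereal_def)
  also have "\<dots> = integral {0<..<1} (\<lambda>u. F (g u) * g' u)"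
    using set_borel_integral_eq_integral(2)[OF intB]
    by (simp add: interval_lebesgue_integral_def Ioo)
  also have "\<dots> = integral {0<..<1} (\<lambda>u. s powr q * B u)"
    by (rule integral_cong) (auto simp: FB)
  also have "\<dots> = s powr q * Beta q (\<alpha> - q)"
    using B_int by (simp add: integral_unique)
  finally have "integral {0<..} F = s powr q * Beta q (\<alpha> - q)" .
  moreover have "F integrable_on {0<..}"
    using F_int set_borel_integral_eq_integral(1)[of "{0<..}" F] by (simp add: zero_ereal_def)
  ultimately show ?thesis
    unfolding F_def[symmetric] by (simp add: has_integral_iff)
qed

definition mellin :: "(real \<Rightarrow> real) \<Rightarrow> real \<Rightarrow> real" where
  "mellin f p = integral {0<..} (\<lambda>t. t powr (p - 1) * f t)"

lemma H_fun_eq_mellin: "p \<noteq> 0 \<Longrightarrow> H_fun \<alpha> f p = mellin f p / Beta p (\<alpha> - p)"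
  by (simp add: H_fun_def mellin_def)

lemma integrable_of_mellin_nonzero:
  "mellin f p \<noteq> 0 \<Longrightarrow> (\<lambda>t. t powr (p - 1) * f t) integrable_on {0<..}"
  unfolding mellin_def using not_integrable_integral by blast

lemma mellin_nonneg:
  assumes "\<And>t. 0 < t \<Longrightarrow> 0 \<le> f t"
  shows "0 \<le> mellin f p"
proof (cases "(\<lambda>t. t powr (p - 1) * f t) integrable_on {0<..}")
  case True
  then show ?thesis
    unfolding mellin_def using assms by (intro integral_nonneg) auto
qed (simp add: mellin_def not_integrable_integral)

lemma mellin_pos_imp_ex_pos:
  assumes nonneg: "\<And>t. 0 < t \<Longrightarrow> 0 \<le> f t" and pos: "0 < mellin f p"
  shows "\<exists>y>0. 0 < f y"
proof (rule ccontr)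
  assume none: "\<not> (\<exists>y>0. 0 < f y)"
  have zero: "f t = 0" if "0 < t" for t
  proof -
    have "\<not> 0 < f t"
      using none that by blast
    then show ?thesis
      using nonneg[OF that] by simp
  qed
  have "mellin f p = integral {0<..} (\<lambda>_::real. 0)"
    unfolding mellin_def by (rule integral_cong) (simp add: zero)
  then show False
    using pos by simp
qed

lemma mellin_integrand_measurable:
  fixes f :: "real \<Rightarrow> real"
  assumes "f \<in> borel_measurable (lebesgue_on {0<..})"
  shows "(\<lambda>t. t powr (p - 1) * f t) \<in> borel_measurable (lebesgue_on {0<..})"
proof -
  have "continuous_on {0<..} (\<lambda>t::real. t powr (p - 1))"
    by (intro continuous_intros) auto
  then have "(\<lambda>t::real. t powr (p - 1)) \<in> borel_measurable (lebesgue_on {0<..})"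
    by (intro continuous_imp_measurable_on_sets_lebesgue) auto
  then show ?thesis
    using assms by (rule borel_measurable_times)
qed

text \<open>The -1/\<alpha>-affine functions (a + b t)^(-\<alpha>) with a, b > 0, parametrised by the value
  k at 0 and the scale s.\<close>

definition beta_profile :: "real \<Rightarrow> real \<Rightarrow> real \<Rightarrow> real \<Rightarrow> real" where
  "beta_profile \<alpha> k s t = k * (1 + t / s) powr (-\<alpha>)"

lemma beta_profile_at_0 [simp]: "beta_profile \<alpha> k s 0 = k"
  by (simp add: beta_profile_def)

lemma beta_profile_eq_affine_powr:
  assumes "0 < \<alpha>" "0 < k" "0 < s" "0 \<le> t"
  shows "beta_profile \<alpha> k s t = (k powr (-1/\<alpha>) * (1 + t / s)) powr (-\<alpha>)"
  using assms by (simp add: beta_profile_def powr_mult powr_powr add_pos_nonneg)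

lemma has_integral_mellin_beta_profile:
  assumes "0 < q" "q < \<alpha>" "0 < s"
  shows "((\<lambda>t. t powr (q - 1) * beta_profile \<alpha> k s t) has_integral k * s powr q * Beta q (\<alpha> - q)) {0<..}"
  using has_integral_mult_right[OF has_integral_Beta_Ioi[OF assms], of k]
  by (simp add: beta_profile_def mult_ac)

lemma mellin_beta_profile:
  assumes "0 < q" "q < \<alpha>" "0 < s"
  shows "mellin (beta_profile \<alpha> k s) q = k * s powr q * Beta q (\<alpha> - q)"
  using has_integral_mellin_beta_profile[OF assms] by (simp add: mellin_def integral_unique)

lemma neg_inv_concave_on_nonneg: "neg_inv_concave_on \<alpha> S f \<Longrightarrow> x \<in> S \<Longrightarrow> 0 \<le> f x"
  unfolding neg_inv_concave_on_def by auto

lemma neg_inv_concave_onD: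
  assumes "neg_inv_concave_on \<alpha> S f" "x \<in> S" "y \<in> S" "0 < f x" "0 < f y" "0 \<le> l" "l \<le> 1"
  shows "((1 - l) * f x powr (-1/\<alpha>) + l * f y powr (-1/\<alpha>)) powr (-\<alpha>) \<le> f ((1 - l) * x + l * y)"
  using assms unfolding neg_inv_concave_on_def by auto

lemma powr_neg_inv_le:
  fixes \<alpha> F P :: real
  assumes "0 < \<alpha>" "0 < F" "0 < P" "P powr (-\<alpha>) \<le> F"
  shows "F powr (-1/\<alpha>) \<le> P"
proof -
  have "F powr (-1/\<alpha>) \<le> (P powr (-\<alpha>)) powr (-1/\<alpha>)"
    using assms by (intro powr_mono2') auto
  also have "\<dots> = P"
    using assms by (simp add: powr_powr)
  finally show ?thesis .
qed

lemma powr_neg_inv_less: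
  fixes \<alpha> F P :: real
  assumes "0 < \<alpha>" "0 < F" "0 < P" "P powr (-\<alpha>) < F"
  shows "F powr (-1/\<alpha>) < P"
proof -
  have "F powr (-1/\<alpha>) < (P powr (-\<alpha>)) powr (-1/\<alpha>)"
    using assms by (intro powr_less_mono2_neg) auto
  also have "\<dots> = P"
    using assms by (simp add: powr_powr)
  finally show ?thesis .
qed

lemma neg_inv_concave_gt_affine_powr:
  fixes \<psi> f :: "real \<Rightarrow> real"
  assumes \<alpha>: "0 < \<alpha>" and f: "neg_inv_concave_on \<alpha> S f" and xy: "x \<in> S" "y \<in> S"
    and l: "0 \<le> l" "l \<le> 1"
    and \<psi>: "0 < \<psi> x" "0 < \<psi> y" "\<psi> ((1 - l) * x + l * y) = (1 - l) * \<psi> x + l * \<psi> y"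
    and ge: "\<psi> x powr (-\<alpha>) \<le> f x" "\<psi> y powr (-\<alpha>) \<le> f y"
    and gt: "l < 1 \<and> \<psi> x powr (-\<alpha>) < f x \<or> 0 < l \<and> \<psi> y powr (-\<alpha>) < f y"
  shows "\<psi> ((1 - l) * x + l * y) powr (-\<alpha>) < f ((1 - l) * x + l * y)"
proof -
  have fpos: "0 < f x" "0 < f y"
    using ge \<psi> by (smt (verit) powr_gt_zero)+
  define px where "px = f x powr (-1/\<alpha>)"
  define py where "py = f y powr (-1/\<alpha>)"
  have p: "0 < px" "0 < py"
    using fpos by (auto simp: px_def py_def)
  have "px \<le> \<psi> x" "py \<le> \<psi> y"
    unfolding px_def py_def using powr_neg_inv_le \<alpha> fpos \<psi> ge by auto
  moreover have "l < 1 \<and> px < \<psi> x \<or> 0 < l \<and> py < \<psi> y"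
    unfolding px_def py_def using powr_neg_inv_less \<alpha> fpos \<psi> gt by auto
  ultimately have lt: "(1 - l) * px + l * py < \<psi> ((1 - l) * x + l * y)"
    using l \<psi>(3) by (smt (verit) mult_left_mono mult_strict_left_mono)
  have pos: "0 < (1 - l) * px + l * py"
    using l p by (smt (verit) mult_nonneg_nonneg mult_pos_pos)
  have "\<psi> ((1 - l) * x + l * y) powr (-\<alpha>) < ((1 - l) * px + l * py) powr (-\<alpha>)"
    using lt pos \<alpha> by (intro powr_less_mono2_neg) auto
  also have "\<dots> \<le> f ((1 - l) * x + l * y)"
    unfolding px_def py_def using neg_inv_concave_onD[OF f xy fpos l] .
  finally show ?thesis .
qed

lemma beta_profile_less_between:
  assumes \<alpha>: "0 < \<alpha>" and f: "neg_inv_concave_on \<alpha> {0..} f" and ks: "0 < k" "0 < s"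
    and x: "0 < x" "beta_profile \<alpha> k s x < f x" and y: "0 < y" "beta_profile \<alpha> k s y < f y"
    and t: "x \<le> t" "t \<le> y"
  shows "beta_profile \<alpha> k s t < f t"
proof (cases "x = y")
  case False
  define \<psi> where "\<psi> t = k powr (-1/\<alpha>) * (1 + t / s)" for t
  define l where "l = (t - x) / (y - x)"
  have l: "0 \<le> l" "l \<le> 1"
    using False t by (auto simp: l_def divide_simps)
  have "l * (y - x) = t - x"
    using False by (simp add: l_def)
  then have t_eq: "t = (1 - l) * x + l * y"
    by (simp add: algebra_simps)
  have profile: "beta_profile \<alpha> k s u = \<psi> u powr (-\<alpha>)" if "0 \<le> u" for u
    unfolding \<psi>_def using beta_profile_eq_affine_powr[OF \<alpha> ks that] .
  have "\<psi> ((1 - l) * x + l * y) powr (-\<alpha>) < f ((1 - l) * x + l * y)"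
  proof (rule neg_inv_concave_gt_affine_powr[OF \<alpha> f _ _ l])
    show "\<psi> x powr (-\<alpha>) \<le> f x" "\<psi> y powr (-\<alpha>) \<le> f y"
      "l < 1 \<and> \<psi> x powr (-\<alpha>) < f x \<or> 0 < l \<and> \<psi> y powr (-\<alpha>) < f y"
      using x y l profile by auto
  qed (use x y ks in \<open>auto simp: \<psi>_def add_pos_nonneg field_simps\<close>)
  then show ?thesis
    using profile x t t_eq by simp
qed (use x t in simp)

lemma beta_profile_less_below:
  assumes \<alpha>: "0 < \<alpha>" and f: "neg_inv_concave_on \<alpha> {0..} f" and s: "0 < s"
    and f0: "0 < f 0" and y: "0 < y" "beta_profile \<alpha> (f 0) s y < f y" and t: "0 < t" "t < y"
  shows "beta_profile \<alpha> (f 0) s t < f t"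
proof -
  define \<psi> where "\<psi> t = f 0 powr (-1/\<alpha>) * (1 + t / s)" for t
  define l where "l = t / y"
  have l: "0 \<le> l" "l \<le> 1" "0 < l" and t_eq: "t = (1 - l) * 0 + l * y"
    using y t by (auto simp: l_def)
  have profile: "beta_profile \<alpha> (f 0) s u = \<psi> u powr (-\<alpha>)" if "0 \<le> u" for u
    unfolding \<psi>_def using beta_profile_eq_affine_powr[OF \<alpha> f0 s that] .
  have "\<psi> ((1 - l) * 0 + l * y) powr (-\<alpha>) < f ((1 - l) * 0 + l * y)"
  proof (rule neg_inv_concave_gt_affine_powr[OF \<alpha> f _ _ l(1,2)])
    show "\<psi> 0 powr (-\<alpha>) \<le> f 0" "\<psi> y powr (-\<alpha>) \<le> f y"
      "l < 1 \<and> \<psi> 0 powr (-\<alpha>) < f 0 \<or> 0 < l \<and> \<psi> y powr (-\<alpha>) < f y"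
      using y l profile[of 0] profile[of y] by auto
  qed (use y s f0 in \<open>auto simp: \<psi>_def add_pos_nonneg field_simps\<close>)
  then show ?thesis
    using profile t t_eq by simp
qed

lemma powr_geometric_mean_le:
  fixes x y l r :: real
  assumes "0 < x" "0 < y" "0 \<le> l" "l \<le> 1"
  shows "(x powr (1 - l) * y powr l) powr r \<le> (1 - l) * x powr r + l * y powr r"
proof -
  have "(x powr (1 - l) * y powr l) powr r = (x powr r) powr (1 - l) * (y powr r) powr l"
    using assms by (simp add: powr_mult powr_powr mult.commute)
  then show ?thesis
    using Youngs_inequality_0[of "1 - l" l "x powr r" "y powr r"] assms by simp
qed

lemma powr_sum_geometric_convex:
  fixes a b x y l \<beta> \<gamma> :: real
  assumes "0 \<le> a" "0 \<le> b" "0 < x" "0 < y" "0 \<le> l" "l \<le> 1"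
  defines "h \<equiv> \<lambda>t. a * t powr \<beta> + b * t powr \<gamma>"
  shows "h (x powr (1 - l) * y powr l) \<le> (1 - l) * h x + l * h y"
proof -
  have "a * (x powr (1 - l) * y powr l) powr \<beta> \<le> a * ((1 - l) * x powr \<beta> + l * y powr \<beta>)"
    "b * (x powr (1 - l) * y powr l) powr \<gamma> \<le> b * ((1 - l) * x powr \<gamma> + l * y powr \<gamma>)"
    using assms powr_geometric_mean_le by (auto intro!: mult_left_mono)
  then show ?thesis
    unfolding h_def by (simp add: algebra_simps)
qed

lemma ex_geometric_interpolation:
  fixes x y t :: real
  assumes "0 < x" "x < y" "x \<le> t" "t \<le> y"
  obtains l where "0 \<le> l" "l \<le> 1" "t = x powr (1 - l) * y powr l"
proof
  define l where "l = (ln t - ln x) / (ln y - ln x)"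
  have d: "0 < ln y - ln x"
    using assms by simp
  show "0 \<le> l" "l \<le> 1"
    using assms d by (auto simp: l_def divide_simps)
  have "x powr (1 - l) * y powr l = exp (ln x + l * (ln y - ln x))"
    using assms by (simp add: powr_def exp_add[symmetric] algebra_simps)
  also have "\<dots> = t"
    using assms d by (simp add: l_def)
  finally show "t = x powr (1 - l) * y powr l" ..
qed

lemma powr_sum_two_point_level:
  fixes t1 t2 \<beta> \<gamma> :: real
  assumes t: "0 < t1" "t1 < t2" and \<beta>\<gamma>: "\<beta> < 0" "0 < \<gamma>"
  obtains a b where "0 \<le> a" "0 \<le> b"
    "a * t1 powr \<beta> + b * t1 powr \<gamma> = 1" "a * t2 powr \<beta> + b * t2 powr \<gamma> = 1"
proof -
  have A: "t2 powr \<beta> < t1 powr \<beta>"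
    using t \<beta>\<gamma> by (intro powr_less_mono2_neg) auto
  have B: "t1 powr \<gamma> < t2 powr \<gamma>"
    using t \<beta>\<gamma> by (intro powr_less_mono2) auto
  define det where "det = t1 powr \<beta> * t2 powr \<gamma> - t2 powr \<beta> * t1 powr \<gamma>"
  have "t2 powr \<beta> * t1 powr \<gamma> < t1 powr \<beta> * t2 powr \<gamma>"
    using A B t by (intro mult_strict_mono) auto
  then have det: "0 < det"
    unfolding det_def by linarith
  show ?thesis
  proof (rule that)
    show "0 \<le> (t2 powr \<gamma> - t1 powr \<gamma>) / det" "0 \<le> (t1 powr \<beta> - t2 powr \<beta>) / det"
      using A B det by auto
    show "(t2 powr \<gamma> - t1 powr \<gamma>) / det * t1 powr \<beta> + (t1 powr \<beta> - t2 powr \<beta>) / det * t1 powr \<gamma> = 1"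
      "(t2 powr \<gamma> - t1 powr \<gamma>) / det * t2 powr \<beta> + (t1 powr \<beta> - t2 powr \<beta>) / det * t2 powr \<gamma> = 1"
      using det by (simp_all add: field_simps) (simp_all add: det_def algebra_simps)
  qed
qed

text \<open>A separator for S \<subseteq> (0, \<infinity>) is a function that is \<le> 1 on S and \<ge> 1 on the rest of
  (0, \<infinity>); multiplied by f - g it gives an integrand of constant sign when S = {g < f}.
  Since a t^\<beta> + b t^\<gamma> with a, b \<ge> 0 is convex in ln t, order-convex sets have such separators.\<close>

lemma interval_powr_separator:
  fixes t1 t2 \<beta> \<gamma> :: real
  assumes t1: "0 < t1" and t12: "t1 < t2" and \<beta>\<gamma>: "\<beta> < 0" "0 < \<gamma>"
  obtains a b where "0 \<le> a" "0 \<le> b"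
    "\<And>t. t1 \<le> t \<Longrightarrow> t \<le> t2 \<Longrightarrow> a * t powr \<beta> + b * t powr \<gamma> \<le> 1"
    "\<And>t. 0 < t \<Longrightarrow> t \<le> t1 \<or> t2 \<le> t \<Longrightarrow> 1 \<le> a * t powr \<beta> + b * t powr \<gamma>"
proof -
  obtain a b where ab: "0 \<le> a" "0 \<le> b"
    and level: "a * t1 powr \<beta> + b * t1 powr \<gamma> = 1" "a * t2 powr \<beta> + b * t2 powr \<gamma> = 1"
    using powr_sum_two_point_level[OF t1 t12 \<beta>\<gamma>] by blast
  define h where "h t = a * t powr \<beta> + b * t powr \<gamma>" for t
  have convex_h: "h (x powr (1 - l) * y powr l) \<le> (1 - l) * h x + l * h y"
    if "0 < x" "0 < y" "0 \<le> l" "l \<le> 1" for x y l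
    unfolding h_def using powr_sum_geometric_convex[OF ab that] .
  have inside: "h t \<le> 1" if t: "t1 \<le> t" "t \<le> t2" for t
  proof -
    obtain l where "0 \<le> l" "l \<le> 1" "t = t1 powr (1 - l) * t2 powr l"
      using ex_geometric_interpolation[OF t1 t12 t] .
    then show ?thesis
      using convex_h[of t1 t2 l] t1 t12 level by (simp add: h_def)
  qed
  have outside: "1 \<le> h t" if t: "0 < t" "t \<le> t1 \<or> t2 \<le> t" for t
    using t(2)
  proof
    assume "t \<le> t1"
    then obtain l where l: "0 \<le> l" "l \<le> 1" "t1 = t powr (1 - l) * t2 powr l"
      using ex_geometric_interpolation[OF t(1), of t2 t1] t12 by auto
    have "l \<noteq> 1"
      using l(3) t12 t1 t(1) by auto
    moreover have "(1 - l) * 1 \<le> (1 - l) * h t"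
      using convex_h[OF t(1) _ l(1,2), of t2] l(3) t1 t12 level by (simp add: h_def algebra_simps)
    ultimately show ?thesis
      using l(2) by simp
  next
    assume "t2 \<le> t"
    then obtain l where l: "0 \<le> l" "l \<le> 1" "t2 = t1 powr (1 - l) * t powr l"
      using ex_geometric_interpolation[OF t1, of t t2] t12 by auto
    have "l \<noteq> 0"
      using l(3) t12 t1 t(1) by auto
    moreover have "l * 1 \<le> l * h t"
      using convex_h[OF t1 t(1) l(1,2)] l(3) t1 t12 level by (simp add: h_def algebra_simps)
    ultimately show ?thesis
      using l(1) by simp
  qed
  show ?thesis
    using that[OF ab] inside outside by (simp add: h_def)
qed

lemma down_closed_powr_separator:
  fixes S :: "real set" and \<gamma> :: real
  assumes S: "S \<subseteq> {0<..}" "S \<noteq> {}" and down: "\<And>s t. s \<in> S \<Longrightarrow> 0 < t \<Longrightarrow> t < s \<Longrightarrow> t \<in> S"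
    and \<gamma>: "0 < \<gamma>"
  obtains b where "0 \<le> b" "\<And>t. t \<in> S \<Longrightarrow> b * t powr \<gamma> \<le> 1"
    "\<And>t. 0 < t \<Longrightarrow> t \<notin> S \<Longrightarrow> 1 \<le> b * t powr \<gamma>"
proof (cases "bdd_above S")
  case True
  define t2 where "t2 = Sup S"
  have up: "x \<le> t2" if "x \<in> S" for x
    using True that by (simp add: t2_def cSup_upper)
  have t2: "0 < t2"
    using S up by force
  have "S \<subseteq> {0<..t2}" and "{0<..<t2} \<subseteq> S"
    using S up down less_cSup_iff[OF S(2) True] by (auto simp: t2_def)
  then show ?thesis
    using t2 \<gamma> by (intro that[of "t2 powr (-\<gamma>)"])
      (auto simp: powr_minus divide_simps powr_mono2 subset_eq not_less)
next
  case False
  then have "t \<in> S" if "0 < t" for t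
    using down that unfolding bdd_above_def by (meson not_le)
  then show ?thesis
    using S by (intro that[of 0]) auto
qed

lemma up_closed_powr_separator:
  fixes S :: "real set" and \<beta> :: real
  assumes S: "S \<subseteq> {0<..}" "S \<noteq> {}" and up: "\<And>s t. s \<in> S \<Longrightarrow> s < t \<Longrightarrow> t \<in> S"
    and \<beta>: "\<beta> < 0"
  obtains a where "0 \<le> a" "\<And>t. t \<in> S \<Longrightarrow> a * t powr \<beta> \<le> 1"
    "\<And>t. 0 < t \<Longrightarrow> t \<notin> S \<Longrightarrow> 1 \<le> a * t powr \<beta>"
proof -
  define S' where "S' = {t. 0 < t \<and> inverse t \<in> S}"
  have S': "S' \<subseteq> {0<..}" "S' \<noteq> {}"
    using S by (auto simp: S'_def) (metis inverse_inverse_eq inverse_positive_iff_positive subsetD greaterThan_iff)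
  have down: "t \<in> S'" if "s \<in> S'" "0 < t" "t < s" for s t
    using that up[of "inverse s" "inverse t"] by (auto simp: S'_def)
  obtain a where a: "0 \<le> a" "\<And>t. t \<in> S' \<Longrightarrow> a * t powr (-\<beta>) \<le> 1"
    "\<And>t. 0 < t \<Longrightarrow> t \<notin> S' \<Longrightarrow> 1 \<le> a * t powr (-\<beta>)"
    using down_closed_powr_separator[of S' "-\<beta>"] S' down \<beta> by (metis neg_0_less_iff_less)
  have inv: "inverse t powr (-\<beta>) = t powr \<beta>" for t
    by (simp add: powr_minus inverse_powr)
  show ?thesis
  proof (rule that[OF a(1)])
    fix t assume "t \<in> S"
    then have "inverse t \<in> S'"
      using S by (auto simp: S'_def)
    then show "a * t powr \<beta> \<le> 1"
      using a(2) inv by metis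
  next
    fix t assume "0 < t" "t \<notin> S"
    then have "0 < inverse t" "inverse t \<notin> S'"
      by (auto simp: S'_def)
    then show "1 \<le> a * t powr \<beta>"
      using a(3) inv by metis
  qed
qed

lemma order_convex_powr_separator:
  fixes S :: "real set" and \<beta> \<gamma> :: real
  assumes interval: "is_interval S" and S: "S \<subseteq> {0<..}" and uv: "u \<in> S" "v \<in> S" "u < v"
    and \<beta>\<gamma>: "\<beta> < 0" "0 < \<gamma>"
  obtains a b where "0 \<le> a" "0 \<le> b"
    "\<And>t. t \<in> S \<Longrightarrow> a * t powr \<beta> + b * t powr \<gamma> \<le> 1"
    "\<And>t. 0 < t \<Longrightarrow> t \<notin> S \<Longrightarrow> 1 \<le> a * t powr \<beta> + b * t powr \<gamma>"
proof -
  have convex: "t \<in> S" if "x \<in> S" "y \<in> S" "x \<le> t" "t \<le> y" for x y t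
    using interval that unfolding is_interval_1 by blast
  have "S \<noteq> {}"
    using uv by auto
  consider (near_0) "\<forall>e>0. \<exists>x\<in>S. x < e" | (unbounded) "\<not> bdd_above S"
    | (bounded) e where "0 < e" "\<forall>x\<in>S. e \<le> x" "bdd_above S"
    by (meson not_le)
  then show ?thesis
  proof cases
    case near_0
    have "t \<in> S" if "s \<in> S" "0 < t" "t < s" for s t
      using near_0 convex that by (meson less_imp_le)
    then obtain b where "0 \<le> b" "\<And>t. t \<in> S \<Longrightarrow> b * t powr \<gamma> \<le> 1"
      "\<And>t. 0 < t \<Longrightarrow> t \<notin> S \<Longrightarrow> 1 \<le> b * t powr \<gamma>"
      using down_closed_powr_separator[OF S \<open>S \<noteq> {}\<close> _ \<beta>\<gamma>(2)] by blast
    then show ?thesis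
      by (intro that[of 0 b]) auto
  next
    case unbounded
    have "t \<in> S" if "s \<in> S" "s < t" for s t
      using unbounded convex that unfolding bdd_above_def by (meson less_imp_le not_le)
    then obtain a where "0 \<le> a" "\<And>t. t \<in> S \<Longrightarrow> a * t powr \<beta> \<le> 1"
      "\<And>t. 0 < t \<Longrightarrow> t \<notin> S \<Longrightarrow> 1 \<le> a * t powr \<beta>"
      using up_closed_powr_separator[OF S \<open>S \<noteq> {}\<close> _ \<beta>\<gamma>(1)] by blast
    then show ?thesis
      by (intro that[of a 0]) auto
  next
    case bounded
    define t1 t2 where "t1 = Inf S" "t2 = Sup S"
    have bdd: "bdd_below S" "bdd_above S"
      using bounded by (auto simp: bdd_below_def)
    have t1_le: "t1 \<le> x" and le_t2: "x \<le> t2" if "x \<in> S" for x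
      using bdd that by (auto simp: t1_t2_def cInf_lower cSup_upper)
    have t1: "0 < t1"
      using bounded \<open>S \<noteq> {}\<close> unfolding t1_t2_def by (meson cInf_greatest less_le_trans)
    have t12: "t1 < t2"
      using t1_le[OF uv(1)] le_t2[OF uv(2)] uv(3) by simp
    have between: "t \<in> S" if "t1 < t" "t < t2" for t
      using that convex cInf_less_iff[OF \<open>S \<noteq> {}\<close> bdd(1)] less_cSup_iff[OF \<open>S \<noteq> {}\<close> bdd(2)]
      unfolding t1_t2_def by (meson less_imp_le)
    obtain a b where ab: "0 \<le> a" "0 \<le> b"
      and inside: "\<And>t. t1 \<le> t \<Longrightarrow> t \<le> t2 \<Longrightarrow> a * t powr \<beta> + b * t powr \<gamma> \<le> 1"
      and outside: "\<And>t. 0 < t \<Longrightarrow> t \<le> t1 \<or> t2 \<le> t \<Longrightarrow> 1 \<le> a * t powr \<beta> + b * t powr \<gamma>"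
      using interval_powr_separator[OF t1 t12 \<beta>\<gamma>] by blast
    show ?thesis
    proof (rule that[OF ab])
      show "a * t powr \<beta> + b * t powr \<gamma> \<le> 1" if "t \<in> S" for t
        using inside t1_le le_t2 that by simp
      show "1 \<le> a * t powr \<beta> + b * t powr \<gamma>" if "0 < t" "t \<notin> S" for t
        using outside[OF that(1)] between that by force
    qed
  qed
qed

lemma mellin_integrable_between:
  fixes f :: "real \<Rightarrow> real"
  assumes meas: "f \<in> borel_measurable (lebesgue_on {0<..})" and nonneg: "\<And>t. 0 < t \<Longrightarrow> 0 \<le> f t"
    and int0: "(\<lambda>t. t powr (q0 - 1) * f t) integrable_on {0<..}"
    and int1: "(\<lambda>t. t powr (q1 - 1) * f t) integrable_on {0<..}"
    and q: "q0 \<le> q" "q \<le> q1"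
  shows "(\<lambda>t. t powr (q - 1) * f t) integrable_on {0<..}"
proof (rule measurable_bounded_by_integrable_imp_integrable_real[OF mellin_integrand_measurable[OF meas]])
  show "(\<lambda>t. t powr (q0 - 1) * f t + t powr (q1 - 1) * f t) integrable_on {0<..}"
    using int0 int1 by (rule integrable_add)
  fix t :: real
  assume "t \<in> {0<..}"
  then have t: "0 < t" and ft: "0 \<le> f t"
    using nonneg by auto
  have "t powr (q - 1) \<le> t powr (q0 - 1) + t powr (q1 - 1)"
  proof (cases "t \<le> 1")
    case True
    then have "t powr (q - 1) \<le> t powr (q0 - 1)"
      using t q by (intro powr_mono') auto
    then show ?thesis
      by (simp add: add_increasing2)
  next
    case False
    then have "t powr (q - 1) \<le> t powr (q1 - 1)"
      using q by (intro powr_mono) auto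
    then show ?thesis
      by (simp add: add_increasing)
  qed
  then show "\<bar>t powr (q - 1) * f t\<bar> \<le> t powr (q0 - 1) * f t + t powr (q1 - 1) * f t"
    using ft mult_right_mono by (fastforce simp: algebra_simps)
qed auto

text \<open>On [t0, y] the convex function f^(-1/\<alpha>) lies below its chord, which is at most
  (1 + 2 f(y)^(-1/\<alpha>) / y) t once f(t0)^(-1/\<alpha>) \<le> t and t0 < y/2.\<close>

lemma neg_inv_concave_lower_bound_near_0:
  fixes f :: "real \<Rightarrow> real"
  assumes \<alpha>: "0 < \<alpha>" and f: "neg_inv_concave_on \<alpha> {0..} f"
    and t0: "0 \<le> t0" "t0 < y / 2" "0 < f t0" "f t0 powr (-1/\<alpha>) \<le> t"
    and t: "t0 \<le> t" "t \<le> y" and y: "0 < f y"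
  shows "((1 + 2 * f y powr (-1/\<alpha>) / y) * t) powr (-\<alpha>) \<le> f t"
proof -
  define \<phi>0 \<phi>y where "\<phi>0 = f t0 powr (-1/\<alpha>)" and "\<phi>y = f y powr (-1/\<alpha>)"
  have \<phi>: "0 < \<phi>0" "0 < \<phi>y"
    using t0 y by (auto simp: \<phi>0_def \<phi>y_def)
  define l where "l = (t - t0) / (y - t0)"
  have l: "0 \<le> l" "l \<le> 1"
    using t t0 by (auto simp: l_def divide_simps)
  have "l * (y - t0) = t - t0"
    using t0 by (simp add: l_def)
  then have t_eq: "t = (1 - l) * t0 + l * y"
    by (simp add: algebra_simps)
  have "l \<le> t / (y - t0)"
    using t0 t by (simp add: l_def divide_right_mono)
  also have "\<dots> \<le> t / (y / 2)"
    using t0 t by (intro divide_left_mono) auto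
  also have "\<dots> = 2 * t / y"
    by simp
  finally have "l * \<phi>y \<le> 2 * t / y * \<phi>y"
    using \<phi> by (intro mult_right_mono) auto
  moreover have "(1 - l) * \<phi>0 \<le> \<phi>0"
    using l \<phi> by (intro mult_left_le_one_le) auto
  then have "(1 - l) * \<phi>0 \<le> t"
    using t0(4) unfolding \<phi>0_def by linarith
  ultimately have le: "(1 - l) * \<phi>0 + l * \<phi>y \<le> (1 + 2 * \<phi>y / y) * t"
    by (simp add: algebra_simps)
  have pos: "0 < (1 - l) * \<phi>0 + l * \<phi>y"
    using l \<phi> by (cases "l = 0") (auto intro: add_nonneg_pos)
  have "((1 + 2 * \<phi>y / y) * t) powr (-\<alpha>) \<le> ((1 - l) * \<phi>0 + l * \<phi>y) powr (-\<alpha>)"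
    using le pos \<alpha> by (intro powr_mono2') auto
  also have "\<dots> \<le> f t"
    unfolding \<phi>0_def \<phi>y_def t_eq using t0 t y l
    by (intro neg_inv_concave_onD[OF f]) auto
  finally show ?thesis
    by (simp add: \<phi>y_def)
qed

lemma ex_small_powr_gt:
  fixes c d e I :: real
  assumes c: "0 < c" and d: "0 < d" and e: "e < 0"
  obtains \<delta> where "0 < \<delta>" "\<delta> \<le> d" "I < c * \<delta> powr e"
proof -
  define M where "M = max I 0 / c + 1"
  have M: "0 < M"
    using c by (simp add: M_def add_nonneg_pos)
  define \<delta> where "\<delta> = min (M powr (1 / e)) d"
  have \<delta>: "0 < \<delta>" "\<delta> \<le> d"
    using M d by (auto simp: \<delta>_def)
  have "M = (M powr (1 / e)) powr e"
    using M e by (simp add: powr_powr)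
  also have "\<dots> \<le> \<delta> powr e"
    using e M \<delta> by (intro powr_mono2') (auto simp: \<delta>_def)
  finally have "max I 0 + c \<le> c * \<delta> powr e"
    using c by (simp add: M_def field_simps)
  then have "I < c * \<delta> powr e"
    using c by linarith
  then show ?thesis
    using that \<delta> by blast
qed

text \<open>If f were unbounded near 0, neg_inv_concave_lower_bound_near_0 would give
  f t \<ge> (K t)^(-\<alpha>) on intervals [\<delta>, 2\<delta>] with \<delta> arbitrarily small, forcing
  \<integral>_\<delta>^(2\<delta>) t^(q-1) f \<ge> c \<delta>^(q-\<alpha>) \<rightarrow> \<infinity>.\<close>

lemma neg_inv_concave_bounded_near_0:
  fixes f :: "real \<Rightarrow> real"
  assumes \<alpha>: "0 < \<alpha>" and f: "neg_inv_concave_on \<alpha> {0..} f"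
    and int: "(\<lambda>t. t powr (q - 1) * f t) integrable_on {0<..}" and q: "q < \<alpha>"
    and y: "0 < y" "0 < f y"
  shows "\<exists>\<delta>>0. \<forall>t. 0 < t \<longrightarrow> t < \<delta> \<longrightarrow> f t \<le> \<delta> powr (-\<alpha>)"
proof (rule ccontr)
  assume "\<not> ?thesis"
  then have unbounded: "\<exists>t. 0 < t \<and> t < \<delta> \<and> \<delta> powr (-\<alpha>) < f t" if "0 < \<delta>" for \<delta>
    using that by (meson not_le)
  define I where "I = integral {0<..} (\<lambda>t. t powr (q - 1) * f t)"
  define K where "K = 1 + 2 * f y powr (-1/\<alpha>) / y"
  define e where "e = q - 1 - \<alpha>"
  define c where "c = K powr (-\<alpha>) * 2 powr e"
  have K: "0 < K"
    using y by (simp add: K_def add_pos_pos)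
  then have c: "0 < c"
    by (simp add: c_def)
  have "0 < y / 4" "q - \<alpha> < 0"
    using y q by simp_all
  then obtain \<delta> where \<delta>: "0 < \<delta>" "\<delta> \<le> y / 4" and big: "I < c * \<delta> powr (q - \<alpha>)"
    using ex_small_powr_gt[OF c] by blast
  obtain t0 where t0: "0 < t0" "t0 < \<delta>" "\<delta> powr (-\<alpha>) < f t0"
    using unbounded[OF \<delta>(1)] by blast
  have "0 < \<delta> powr (-\<alpha>)"
    using \<delta> by simp
  then have ft0: "0 < f t0"
    using t0(3) by linarith
  have \<phi>0: "f t0 powr (-1/\<alpha>) < \<delta>"
    using powr_neg_inv_less[OF \<alpha> ft0 \<delta>(1) t0(3)] .
  have lower: "c * \<delta> powr e \<le> t powr (q - 1) * f t" if t: "\<delta> \<le> t" "t \<le> 2 * \<delta>" for t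
  proof -
    have t_pos: "0 < t"
      using t \<delta> by simp
    have "(K * t) powr (-\<alpha>) \<le> f t"
      unfolding K_def using t0 \<phi>0 t \<delta> y
      by (intro neg_inv_concave_lower_bound_near_0[OF \<alpha> f _ _ ft0]) auto
    then have "t powr (q - 1) * (K * t) powr (-\<alpha>) \<le> t powr (q - 1) * f t"
      by (intro mult_left_mono) auto
    moreover have "t powr (q - 1) * (K * t) powr (-\<alpha>) = K powr (-\<alpha>) * t powr e"
      using t_pos K by (simp add: powr_mult e_def powr_add[symmetric] algebra_simps)
    moreover have "K powr (-\<alpha>) * (2 * \<delta>) powr e \<le> K powr (-\<alpha>) * t powr e"
      using q t \<delta> by (intro mult_left_mono powr_mono2') (auto simp: e_def)
    moreover have "K powr (-\<alpha>) * (2 * \<delta>) powr e = c * \<delta> powr e"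
      using \<delta> by (simp add: c_def powr_mult)
    ultimately show ?thesis
      by linarith
  qed
  have sub: "{\<delta>..2 * \<delta>} \<subseteq> {0<..}"
    using \<delta> by auto
  have "integral {\<delta>..2 * \<delta>} (\<lambda>t. c * \<delta> powr e) \<le> integral {\<delta>..2 * \<delta>} (\<lambda>t. t powr (q - 1) * f t)"
    using lower by (intro integral_le integrable_on_subinterval[OF int sub]) auto
  also have "\<dots> \<le> I"
    unfolding I_def using sub neg_inv_concave_on_nonneg[OF f]
    by (intro integral_subset_le integrable_on_subinterval[OF int sub] int) auto
  finally have "c * \<delta> powr (q - \<alpha>) \<le> I"
    using \<delta> by (simp add: e_def powr_diff mult.commute mult.left_commute)
  then show False
    using big by simp
qed

lemma mellin_integrable_below:
  fixes f :: "real \<Rightarrow> real"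
  assumes \<alpha>: "0 < \<alpha>" and f: "neg_inv_concave_on \<alpha> {0..} f"
    and meas: "f \<in> borel_measurable (lebesgue_on {0<..})"
    and int1: "(\<lambda>t. t powr (q1 - 1) * f t) integrable_on {0<..}"
    and q: "0 < q" "q < q1" "q1 < \<alpha>" and y: "0 < y" "0 < f y"
  shows "(\<lambda>t. t powr (q - 1) * f t) integrable_on {0<..}"
proof -
  obtain \<delta> where \<delta>: "0 < \<delta>" "\<And>t. 0 < t \<Longrightarrow> t < \<delta> \<Longrightarrow> f t \<le> \<delta> powr (-\<alpha>)"
    using neg_inv_concave_bounded_near_0[OF \<alpha> f int1 q(3) y] by blast
  define G where "G t = \<delta> powr (-\<alpha>) * (if t \<in> {..<\<delta>} then t powr (q - 1) else 0)
    + \<delta> powr (q - q1) * (t powr (q1 - 1) * f t)" for t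
  have "(\<lambda>t. t powr (q - 1)) integrable_on {0<..\<delta>}"
    using q \<delta> by (intro integrable_on_powr_from_0') auto
  then have "(\<lambda>t. t powr (q - 1)) integrable_on {0<..<\<delta>}"
    by (rule integrable_spike_set) (auto intro: negligible_subset[OF negligible_sing[of \<delta>]])
  then have "(\<lambda>t. if t \<in> {..<\<delta>} then t powr (q - 1) else 0) integrable_on {0<..}"
    by (subst integrable_restrict_Int) (simp add: Int_commute greaterThanLessThan_def)
  then have G: "G integrable_on {0<..}"
    unfolding G_def using int1 by (intro integrable_add integrable_on_mult_right)
  show ?thesis
  proof (rule measurable_bounded_by_integrable_imp_integrable_real[OF mellin_integrand_measurable[OF meas] G])
    fix t :: real
    assume "t \<in> {0<..}"
    then have t: "0 < t" and ft: "0 \<le> f t"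
      using neg_inv_concave_on_nonneg[OF f] by auto
    have tail: "0 \<le> \<delta> powr (q - q1) * (t powr (q1 - 1) * f t)"
      using ft by simp
    have abs: "\<bar>t powr (q - 1) * f t\<bar> = t powr (q - 1) * f t"
      using ft by simp
    show "\<bar>t powr (q - 1) * f t\<bar> \<le> G t"
    proof (cases "t < \<delta>")
      case True
      then have "t powr (q - 1) * f t \<le> \<delta> powr (-\<alpha>) * t powr (q - 1)"
        using \<delta>(2)[OF t] by (simp add: mult.commute mult_right_mono)
      moreover have "G t = \<delta> powr (-\<alpha>) * t powr (q - 1) + \<delta> powr (q - q1) * (t powr (q1 - 1) * f t)"
        using True by (simp add: G_def)
      ultimately show ?thesis
        using tail abs by linarith
    next
      case False
      then have "t powr (q - q1) * (t powr (q1 - 1) * f t) \<le> \<delta> powr (q - q1) * (t powr (q1 - 1) * f t)"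
        using \<delta> q ft by (intro mult_right_mono powr_mono2') auto
      moreover have "t powr (q - q1) * (t powr (q1 - 1) * f t) = t powr (q - 1) * f t"
        using t by (simp add: powr_add[symmetric] mult.assoc[symmetric])
      moreover have "G t = \<delta> powr (q - q1) * (t powr (q1 - 1) * f t)"
        using False by (simp add: G_def)
      ultimately show ?thesis
        using abs by linarith
    qed
  qed auto
qed

lemma mellin_diff_ge_combination:
  fixes f g :: "real \<Rightarrow> real"
  assumes int_f: "\<And>r. r \<in> {q0, q, q1} \<Longrightarrow> (\<lambda>t. t powr (r - 1) * f t) integrable_on {0<..}"
    and int_g: "\<And>r. r \<in> {q0, q, q1} \<Longrightarrow> (\<lambda>t. t powr (r - 1) * g t) integrable_on {0<..}"
    and inside: "\<And>t. 0 < t \<Longrightarrow> g t < f t \<Longrightarrow> a * t powr (q0 - q) + b * t powr (q1 - q) \<le> 1"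
    and outside: "\<And>t. 0 < t \<Longrightarrow> f t \<le> g t \<Longrightarrow> 1 \<le> a * t powr (q0 - q) + b * t powr (q1 - q)"
  shows "a * (mellin f q0 - mellin g q0) + b * (mellin f q1 - mellin g q1) \<le> mellin f q - mellin g q"
proof -
  define D where "D r t = t powr (r - 1) * f t - t powr (r - 1) * g t" for r t
  have D: "D r integrable_on {0<..}" "integral {0<..} (D r) = mellin f r - mellin g r"
    if "r \<in> {q0, q, q1}" for r
    unfolding D_def mellin_def using int_f[OF that] int_g[OF that]
    by (auto intro: integrable_diff integral_diff)
  define h where "h t = D q t - a * D q0 t - b * D q1 t" for t
  have h: "(h has_integral (mellin f q - mellin g q) - a * (mellin f q0 - mellin g q0)
      - b * (mellin f q1 - mellin g q1)) {0<..}"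
    unfolding h_def using D
    by (intro has_integral_diff has_integral_mult_right) (auto simp: has_integral_iff)
  have "0 \<le> h t" if t: "0 < t" for t
  proof -
    have "h t = t powr (q - 1) * ((1 - (a * t powr (q0 - q) + b * t powr (q1 - q))) * (f t - g t))"
      using t by (simp add: h_def D_def algebra_simps flip: powr_add)
    moreover have "0 \<le> (1 - (a * t powr (q0 - q) + b * t powr (q1 - q))) * (f t - g t)"
      using inside[OF t] outside[OF t] by (cases "g t < f t") (auto intro: mult_nonpos_nonpos)
    ultimately show ?thesis
      by simp
  qed
  then show ?thesis
    using has_integral_nonneg[OF h] by auto
qed

lemma mellin_diff_nonpos_if_subsingleton:
  fixes f g :: "real \<Rightarrow> real"
  assumes single: "\<And>u v. 0 < u \<Longrightarrow> 0 < v \<Longrightarrow> g u < f u \<Longrightarrow> g v < f v \<Longrightarrow> u = v"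
    and int_f: "(\<lambda>t. t powr (r - 1) * f t) integrable_on {0<..}"
    and int_g: "(\<lambda>t. t powr (r - 1) * g t) integrable_on {0<..}"
  shows "mellin f r - mellin g r \<le> 0"
proof -
  obtain u where u: "{t. 0 < t \<and> g t < f t} \<subseteq> {u}"
    using single by blast
  define D where "D t = t powr (r - 1) * f t - t powr (r - 1) * g t" for t
  define D' where "D' t = (if t = u then 0 else D t)" for t
  have "D integrable_on {0<..}"
    unfolding D_def using int_f int_g by (rule integrable_diff)
  then have "D' integrable_on {0<..}"
    by (rule integrable_spike[of _ _ "{u}"]) (auto simp: D'_def)
  then have "(\<lambda>t. - D' t) integrable_on {0<..}"
    by (rule integrable_neg)
  then have "0 \<le> integral {0<..} (\<lambda>t. - D' t)"
    by (rule integral_nonneg) (use u in \<open>auto simp: D'_def D_def mult_le_0_iff not_less\<close>)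
  moreover have "integral {0<..} D = integral {0<..} D'"
    by (rule integral_spike[of "{u}"]) (auto simp: D'_def)
  ultimately have "integral {0<..} D \<le> 0"
    by (simp add: integral_neg)
  moreover have "integral {0<..} D = mellin f r - mellin g r"
    unfolding D_def mellin_def using int_f int_g by (rule integral_diff)
  ultimately show ?thesis
    by simp
qed

lemma beta_profile_mellin_le_interior:
  fixes f :: "real \<Rightarrow> real"
  assumes \<alpha>: "0 < \<alpha>" and f: "neg_inv_concave_on \<alpha> {0..} f"
    and meas: "f \<in> borel_measurable (lebesgue_on {0<..})"
    and q: "0 < q0" "q0 < q" "q < q1" "q1 < \<alpha>" and ks: "0 < k" "0 < s"
    and less0: "k * s powr q0 * Beta q0 (\<alpha> - q0) < mellin f q0"
    and less1: "k * s powr q1 * Beta q1 (\<alpha> - q1) < mellin f q1"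
  shows "k * s powr q * Beta q (\<alpha> - q) \<le> mellin f q"
proof -
  define g where "g = beta_profile \<alpha> k s"
  have qs: "\<And>r. r \<in> {q0, q, q1} \<Longrightarrow> 0 < r \<and> r < \<alpha>"
    using q by auto
  have int_g: "(\<lambda>t. t powr (r - 1) * g t) integrable_on {0<..}"
    and mellin_g: "mellin g r = k * s powr r * Beta r (\<alpha> - r)" if "r \<in> {q0, q, q1}" for r
    using has_integral_mellin_beta_profile[of r \<alpha> s k] mellin_beta_profile[of r \<alpha> s k] qs[OF that] ks
    by (auto simp: g_def)
  have "0 < k * s powr r * Beta r (\<alpha> - r)" if "r \<in> {q0, q, q1}" for r
    using qs[OF that] ks by (simp add: Beta_real_pos)
  then have int_f01: "(\<lambda>t. t powr (r - 1) * f t) integrable_on {0<..}" if "r \<in> {q0, q1}" for r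
    using that less0 less1 by (intro integrable_of_mellin_nonzero) force
  then have int_f: "(\<lambda>t. t powr (r - 1) * f t) integrable_on {0<..}" if "r \<in> {q0, q, q1}" for r
    using that mellin_integrable_between[OF meas _ int_f01 int_f01, of q0 q1 q] q
      neg_inv_concave_on_nonneg[OF f] by auto
  define S where "S = {t. 0 < t \<and> g t < f t}"
  have S: "S \<subseteq> {0<..}"
    by (auto simp: S_def)
  have D0: "0 < mellin f q0 - mellin g q0" and D1: "0 < mellin f q1 - mellin g q1"
    using less0 less1 mellin_g by auto
  obtain u v where uv: "u \<in> S" "v \<in> S" "u < v"
  proof (rule ccontr)
    assume "\<not> thesis"
    then have "\<And>u v. 0 < u \<Longrightarrow> 0 < v \<Longrightarrow> g u < f u \<Longrightarrow> g v < f v \<Longrightarrow> u = v"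
      using that by (metis S_def mem_Collect_eq linorder_neqE_linordered_idom)
    then have "mellin f q0 - mellin g q0 \<le> 0"
      using int_f int_g by (intro mellin_diff_nonpos_if_subsingleton) auto
    then show False
      using D0 by simp
  qed
  have interval: "is_interval S"
    unfolding is_interval_1
  proof (intro ballI allI impI)
    fix x y t
    assume "x \<in> S" "y \<in> S" "x \<le> t \<and> t \<le> y"
    then show "t \<in> S"
      using beta_profile_less_between[OF \<alpha> f ks, of x y t] by (auto simp: S_def g_def)
  qed
  obtain a b where ab: "0 \<le> a" "0 \<le> b"
    and inside: "\<And>t. t \<in> S \<Longrightarrow> a * t powr (q0 - q) + b * t powr (q1 - q) \<le> 1"
    and outside: "\<And>t. 0 < t \<Longrightarrow> t \<notin> S \<Longrightarrow> 1 \<le> a * t powr (q0 - q) + b * t powr (q1 - q)"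
    using order_convex_powr_separator[OF interval S uv, of "q0 - q" "q1 - q"] q by auto
  have "a * (mellin f q0 - mellin g q0) + b * (mellin f q1 - mellin g q1) \<le> mellin f q - mellin g q"
    using inside outside by (intro mellin_diff_ge_combination int_f int_g) (auto simp: S_def)
  moreover have "0 \<le> a * (mellin f q0 - mellin g q0) + b * (mellin f q1 - mellin g q1)"
    using ab D0 D1 by simp
  ultimately show ?thesis
    using mellin_g[of q] by simp
qed

lemma beta_profile_mellin_le_endpoint:
  fixes f :: "real \<Rightarrow> real"
  assumes \<alpha>: "0 < \<alpha>" and f: "neg_inv_concave_on \<alpha> {0..} f"
    and meas: "f \<in> borel_measurable (lebesgue_on {0<..})"
    and q: "0 < q" "q < q1" "q1 < \<alpha>" and s: "0 < s" and f0: "0 < f 0"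
    and less1: "f 0 * s powr q1 * Beta q1 (\<alpha> - q1) < mellin f q1"
  shows "f 0 * s powr q * Beta q (\<alpha> - q) \<le> mellin f q"
proof -
  define g where "g = beta_profile \<alpha> (f 0) s"
  have qs: "\<And>r. r \<in> {q, q, q1} \<Longrightarrow> 0 < r \<and> r < \<alpha>"
    using q by auto
  have int_g: "(\<lambda>t. t powr (r - 1) * g t) integrable_on {0<..}"
    and mellin_g: "mellin g r = f 0 * s powr r * Beta r (\<alpha> - r)" if "r \<in> {q, q, q1}" for r
    using has_integral_mellin_beta_profile[of r \<alpha> s "f 0"] mellin_beta_profile[of r \<alpha> s "f 0"]
      qs[OF that] s by (auto simp: g_def)
  have "0 < f 0 * s powr q1 * Beta q1 (\<alpha> - q1)"
    using f0 s q by (simp add: Beta_real_pos)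
  then have mellin1: "0 < mellin f q1"
    using less1 by linarith
  then have int_f1: "(\<lambda>t. t powr (q1 - 1) * f t) integrable_on {0<..}"
    by (intro integrable_of_mellin_nonzero) simp
  obtain y where y: "0 < y" "0 < f y"
    using mellin_pos_imp_ex_pos[of f q1] neg_inv_concave_on_nonneg[OF f] mellin1 by auto
  have int_f: "(\<lambda>t. t powr (r - 1) * f t) integrable_on {0<..}" if "r \<in> {q, q, q1}" for r
    using that int_f1 mellin_integrable_below[OF \<alpha> f meas int_f1 q y] by auto
  define S where "S = {t. 0 < t \<and> g t < f t}"
  have S: "S \<subseteq> {0<..}"
    by (auto simp: S_def)
  have D1: "0 < mellin f q1 - mellin g q1"
    using less1 mellin_g by auto
  have "S \<noteq> {}"
  proof
    assume "S = {}"
    then have "mellin f q1 - mellin g q1 \<le> 0"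
      using int_f int_g by (intro mellin_diff_nonpos_if_subsingleton) (auto simp: S_def)
    then show False
      using D1 by simp
  qed
  have \<gamma>: "0 < q1 - q"
    using q by simp
  have down: "t \<in> S" if "x \<in> S" "0 < t" "t < x" for x t
    using that beta_profile_less_below[OF \<alpha> f s f0, of x t] by (auto simp: S_def g_def)
  obtain b where b: "0 \<le> b"
    and inside: "\<And>t. t \<in> S \<Longrightarrow> b * t powr (q1 - q) \<le> 1"
    and outside: "\<And>t. 0 < t \<Longrightarrow> t \<notin> S \<Longrightarrow> 1 \<le> b * t powr (q1 - q)"
    using down_closed_powr_separator[OF S \<open>S \<noteq> {}\<close> _ \<gamma>] down by blast
  have "0 * (mellin f q - mellin g q) + b * (mellin f q1 - mellin g q1) \<le> mellin f q - mellin g q"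
    using inside outside by (intro mellin_diff_ge_combination int_f int_g) (auto simp: S_def)
  moreover have "0 \<le> b * (mellin f q1 - mellin g q1)"
    using b D1 by simp
  ultimately show ?thesis
    using mellin_g[of q] by simp
qed

lemma log_linear_interpolation:
  fixes R0 R1 x y l :: real
  assumes "0 < R0" "0 < R1" "x < y"
  shows "R0 * exp (((1 - l) * x + l * y - x) * ((ln R1 - ln R0) / (y - x))) = R0 powr (1 - l) * R1 powr l"
proof -
  have "((1 - l) * x + l * y - x) * ((ln R1 - ln R0) / (y - x)) = l * (ln R1 - ln R0)"
    using assms by (simp add: field_simps)
  then have "R0 * exp (((1 - l) * x + l * y - x) * ((ln R1 - ln R0) / (y - x)))
      = exp (ln R0) * exp (l * (ln R1 - ln R0))"
    using assms by simp
  also have "\<dots> = exp ((1 - l) * ln R0 + l * ln R1)"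
    by (simp add: exp_add[symmetric] algebra_simps)
  also have "\<dots> = R0 powr (1 - l) * R1 powr l"
    using assms by (simp add: powr_def exp_add)
  finally show ?thesis .
qed

lemma H_fun_at_0 [simp]: "H_fun \<alpha> f 0 = f 0"
  by (simp add: H_fun_def)

lemma H_fun_nonneg:
  assumes "neg_inv_concave_on \<alpha> {0..} f" "0 \<le> p" "p < \<alpha>"
  shows "0 \<le> H_fun \<alpha> f p"
proof (cases "p = 0")
  case True
  then show ?thesis
    using neg_inv_concave_on_nonneg[OF assms(1), of 0] by simp
next
  case False
  have "0 \<le> mellin f p"
    using neg_inv_concave_on_nonneg[OF assms(1)] by (intro mellin_nonneg) simp
  moreover have "0 < Beta p (\<alpha> - p)"
    using False assms by (intro Beta_real_pos) auto
  ultimately show ?thesis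
    using False by (simp add: H_fun_eq_mellin)
qed

lemma mellin_eq_H_fun: "0 < p \<Longrightarrow> p < \<alpha> \<Longrightarrow> mellin f p = H_fun \<alpha> f p * Beta p (\<alpha> - p)"
  using Beta_real_pos[of p "\<alpha> - p"] by (simp add: H_fun_eq_mellin)

lemma H_fun_log_concave_interior:
  fixes f :: "real \<Rightarrow> real"
  assumes \<alpha>: "0 < \<alpha>" and f: "neg_inv_concave_on \<alpha> {0..} f"
    and meas: "f \<in> borel_measurable (lebesgue_on {0<..})"
    and xy: "0 < x" "x < y" "y < \<alpha>" and l: "0 < l" "l < 1"
    and H: "0 < H_fun \<alpha> f x" "0 < H_fun \<alpha> f y"
  shows "H_fun \<alpha> f x powr (1 - l) * H_fun \<alpha> f y powr l \<le> H_fun \<alpha> f ((1 - l) * x + l * y)"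
proof -
  define z where "z = (1 - l) * x + l * y"
  have z: "x < z" "z < y"
    using mult_strict_left_mono[of x y l] mult_strict_left_mono[of x y "1 - l"] xy l
    by (simp_all add: z_def algebra_simps)
  define \<sigma> where "\<sigma> = (ln (H_fun \<alpha> f y) - ln (H_fun \<alpha> f x)) / (y - x)"
  define \<kappa> where "\<kappa> = H_fun \<alpha> f x * exp (- x * \<sigma>)"
  have profile: "\<kappa> * exp \<sigma> powr p = H_fun \<alpha> f x * exp ((p - x) * \<sigma>)" for p
  proof -
    have "exp \<sigma> powr p = exp (p * \<sigma>)"
      by (simp add: powr_def)
    then show ?thesis
      by (simp add: \<kappa>_def mult.assoc flip: exp_add) (simp add: algebra_simps)
  qed
  have at_y: "\<kappa> * exp \<sigma> powr y = H_fun \<alpha> f y"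
    unfolding profile using H xy by (simp add: \<sigma>_def exp_diff)
  have "\<kappa> * exp \<sigma> powr z = H_fun \<alpha> f x
      * exp (((1 - l) * x + l * y - x) * ((ln (H_fun \<alpha> f y) - ln (H_fun \<alpha> f x)) / (y - x)))"
    unfolding profile by (simp only: \<sigma>_def z_def)
  also have "\<dots> = H_fun \<alpha> f x powr (1 - l) * H_fun \<alpha> f y powr l"
    by (rule log_linear_interpolation[OF H xy(2)])
  finally have at_z: "\<kappa> * exp \<sigma> powr z = H_fun \<alpha> f x powr (1 - l) * H_fun \<alpha> f y powr l" .
  have claim: "w \<le> H_fun \<alpha> f z" if w: "0 < w" "w < \<kappa> * exp \<sigma> powr z" for w
  proof -
    define k where "k = w / exp \<sigma> powr z"
    have k: "0 < k" "k < \<kappa>" and w_eq: "w = k * exp \<sigma> powr z"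
      using w by (simp_all add: k_def pos_divide_less_eq)
    have less: "k * exp \<sigma> powr p < H_fun \<alpha> f p" if "p = x \<or> p = y" for p
    proof -
      have "k * exp \<sigma> powr p < \<kappa> * exp \<sigma> powr p"
        using k by simp
      also have "\<dots> = H_fun \<alpha> f p"
        using that at_y by (auto simp: profile)
      finally show ?thesis .
    qed
    have "k * exp \<sigma> powr z * Beta z (\<alpha> - z) \<le> mellin f z"
    proof (rule beta_profile_mellin_le_interior[OF \<alpha> f meas xy(1) z xy(3) k(1)])
      show "k * exp \<sigma> powr x * Beta x (\<alpha> - x) < mellin f x"
        using less[of x] Beta_real_pos[of x "\<alpha> - x"] xy by (simp add: mellin_eq_H_fun[of _ \<alpha>])
      show "k * exp \<sigma> powr y * Beta y (\<alpha> - y) < mellin f y"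
        using less[of y] Beta_real_pos[of y "\<alpha> - y"] xy by (simp add: mellin_eq_H_fun[of _ \<alpha>])
    qed simp
    then show ?thesis
      using Beta_real_pos[of z "\<alpha> - z"] xy z by (simp add: w_eq mellin_eq_H_fun[of _ \<alpha>])
  qed
  have "\<kappa> * exp \<sigma> powr z \<le> H_fun \<alpha> f z"
  proof (rule dense_le_bounded[of 0])
    show "0 < \<kappa> * exp \<sigma> powr z"
      using H by (simp add: \<kappa>_def)
    show "w \<le> H_fun \<alpha> f z" if "0 < w" "w < \<kappa> * exp \<sigma> powr z" for w
      using claim that .
  qed
  then show ?thesis
    using at_z by (simp add: z_def)
qed

lemma H_fun_log_concave_at_0:
  fixes f :: "real \<Rightarrow> real"
  assumes \<alpha>: "0 < \<alpha>" and f: "neg_inv_concave_on \<alpha> {0..} f"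
    and meas: "f \<in> borel_measurable (lebesgue_on {0<..})"
    and y: "0 < y" "y < \<alpha>" and l: "0 < l" "l < 1"
    and H: "0 < f 0" "0 < H_fun \<alpha> f y"
  shows "f 0 powr (1 - l) * H_fun \<alpha> f y powr l \<le> H_fun \<alpha> f (l * y)"
proof -
  define z where "z = l * y"
  have z: "0 < z" "z < y"
    using y l by (simp_all add: z_def)
  define \<sigma> where "\<sigma> = (ln (H_fun \<alpha> f y) - ln (f 0)) / y"
  have at_y: "f 0 * exp \<sigma> powr y = H_fun \<alpha> f y"
    using H y by (simp add: powr_def \<sigma>_def exp_diff)
  have "f 0 * exp \<sigma> powr z = f 0 * exp (((1 - l) * 0 + l * y - 0) * ((ln (H_fun \<alpha> f y) - ln (f 0)) / (y - 0)))"
    by (simp add: powr_def \<sigma>_def z_def)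
  also have "\<dots> = f 0 powr (1 - l) * H_fun \<alpha> f y powr l"
    by (rule log_linear_interpolation[OF H y(1)])
  finally have at_z: "f 0 * exp \<sigma> powr z = f 0 powr (1 - l) * H_fun \<alpha> f y powr l" .
  have claim: "w \<le> H_fun \<alpha> f z" if w: "0 < w" "w < f 0 * exp \<sigma> powr z" for w
  proof -
    define s where "s = (w / f 0) powr (1 / z)"
    have wf: "0 < w / f 0"
      using w H by simp
    then have s: "0 < s" and s_z: "s powr z = w / f 0"
      using z w H by (simp_all add: s_def powr_powr)
    then have w_eq: "w = f 0 * s powr z"
      using H by simp
    have "s powr z < exp \<sigma> powr z"
      using w H s_z by (simp add: divide_less_eq mult.commute)
    have "s < exp \<sigma>"
    proof (rule ccontr)
      assume "\<not> s < exp \<sigma>"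
      then have "exp \<sigma> powr z \<le> s powr z"
        using z by (intro powr_mono2) auto
      then show False
        using \<open>s powr z < exp \<sigma> powr z\<close> by simp
    qed
    then have "s powr y < exp \<sigma> powr y"
      using s y by (intro powr_less_mono2) auto
    then have "f 0 * s powr y * Beta y (\<alpha> - y) < mellin f y"
      using H y Beta_real_pos[of y "\<alpha> - y"] by (simp add: mellin_eq_H_fun[of _ \<alpha>] at_y[symmetric])
    then have "f 0 * s powr z * Beta z (\<alpha> - z) \<le> mellin f z"
      by (rule beta_profile_mellin_le_endpoint[OF \<alpha> f meas z(1) z(2) y(2) s H(1)])
    then show ?thesis
      using Beta_real_pos[of z "\<alpha> - z"] y z by (simp add: w_eq mellin_eq_H_fun[of _ \<alpha>])
  qed
  have "f 0 * exp \<sigma> powr z \<le> H_fun \<alpha> f z"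
  proof (rule dense_le_bounded[of 0])
    show "0 < f 0 * exp \<sigma> powr z"
      using H by simp
    show "w \<le> H_fun \<alpha> f z" if "0 < w" "w < f 0 * exp \<sigma> powr z" for w
      using claim that .
  qed
  then show ?thesis
    using at_z by (simp add: z_def)
qed

lemma H_fun_log_concave_ordered:
  fixes f :: "real \<Rightarrow> real"
  assumes \<alpha>: "0 < \<alpha>" and f: "neg_inv_concave_on \<alpha> {0..} f"
    and meas: "f \<in> borel_measurable (lebesgue_on {0<..})"
    and xy: "0 \<le> x" "x < y" "y < \<alpha>" and l: "0 < l" "l < 1"
  shows "H_fun \<alpha> f x powr (1 - l) * H_fun \<alpha> f y powr l \<le> H_fun \<alpha> f ((1 - l) * x + l * y)"
proof (cases "H_fun \<alpha> f x = 0 \<or> H_fun \<alpha> f y = 0")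
  case True
  have "0 \<le> (1 - l) * x + l * y" "(1 - l) * x + l * y < \<alpha>"
    using xy l convex_bound_lt[of x \<alpha> y "1 - l" l] by auto
  then have "0 \<le> H_fun \<alpha> f ((1 - l) * x + l * y)"
    by (rule H_fun_nonneg[OF f])
  then show ?thesis
    using True by auto
next
  case False
  then have H: "0 < H_fun \<alpha> f x" "0 < H_fun \<alpha> f y"
    using H_fun_nonneg[OF f, of x] H_fun_nonneg[OF f, of y] xy by auto
  show ?thesis
  proof (cases "x = 0")
    case True
    then show ?thesis
      using H_fun_log_concave_at_0[OF \<alpha> f meas _ xy(3) l] H xy by simp
  next
    case False
    then show ?thesis
      using H_fun_log_concave_interior[OF \<alpha> f meas _ xy(2,3) l H] xy by simp
  qed
qed

lemma log_concave_onI_ordered: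
  fixes g :: "real \<Rightarrow> real" and S :: "real set"
  assumes nonneg: "\<And>x. x \<in> S \<Longrightarrow> 0 \<le> g x"
    and ordered: "\<And>x y l. x \<in> S \<Longrightarrow> y \<in> S \<Longrightarrow> x < y \<Longrightarrow> 0 < l \<Longrightarrow> l < 1 \<Longrightarrow>
      g x powr (1 - l) * g y powr l \<le> g ((1 - l) * x + l * y)"
  shows "log_concave_on S g"
  unfolding log_concave_on_def
proof (intro conjI ballI)
  fix x y l :: real
  assume xy: "x \<in> S" "y \<in> S" and l: "l \<in> {0<..<1}"
  consider "x < y" | "x = y" | "y < x"
    by linarith
  then show "g x powr (1 - l) * g y powr l \<le> g ((1 - l) * x + l * y)"
  proof cases
    case 1
    then show ?thesis
      using ordered xy l by simp
  next
    case 2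
    have "g x powr (1 - l) * g x powr l = g x"
      using nonneg[OF xy(1)] by (cases "g x = 0") (simp_all flip: powr_add)
    then show ?thesis
      using 2 by (simp add: algebra_simps)
  next
    case 3
    then show ?thesis
      using ordered[OF xy(2,1) 3, of "1 - l"] l by (simp add: algebra_simps)
  qed
qed (rule nonneg)

theorem theorem2:
  fixes \<alpha> :: real and f :: "real \<Rightarrow> real"
  assumes "\<alpha> > 0"
    and "neg_inv_concave_on \<alpha> {0..} f"
    and "f integrable_on {0..}"
  shows "log_concave_on {0..<\<alpha>} (H_fun \<alpha> f)"
proof -
  have "f integrable_on {0<..}"
    by (rule integrable_spike_set[OF assms(3)]) (auto intro: negligible_subset[OF negligible_sing[of 0]])
  then have meas: "f \<in> borel_measurable (lebesgue_on {0<..})"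
    by (rule integrable_imp_measurable)
  show ?thesis
  proof (rule log_concave_onI_ordered)
    show "0 \<le> H_fun \<alpha> f p" if "p \<in> {0..<\<alpha>}" for p
      using H_fun_nonneg[OF assms(2)] that by simp
    show "H_fun \<alpha> f x powr (1 - l) * H_fun \<alpha> f y powr l \<le> H_fun \<alpha> f ((1 - l) * x + l * y)"
      if "x \<in> {0..<\<alpha>}" "y \<in> {0..<\<alpha>}" "x < y" "0 < l" "l < 1" for x y l
      using H_fun_log_concave_ordered[OF assms(1,2) meas] that by simp
  qed
qed

end
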